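(* Let $(V,\kappa)$ be a locally convex euclidean space and $D\neq0$ a continuous $\kappa$-skew-symmetric operator on $V$ which integrates to a smooth $\kappa$-orthogonal one-parameter group $\gamma$ on $V$, and such that $\omega_D(x,y):=\kappa(Dx,y)$ is non-degenerate (equivalently, $D$ is injective). Let $\mathfrak g=\mathfrak g(V,\kappa,D)$ and let $\lambda=(z^*,\alpha,t^* )\in\mathfrak g'$. Then the coadjoint orbit of $\lambda$ is non-trivial and semi-equicontinuous if and only if $z^*\neq0$ and $\alpha|_{D(V)}$ is $\kappa$-bounded, i.e. there is $C>0$ with $|\alpha(Dx)|\le C\kappa(Dx,Dx)^{1/2}$ for all $x\in V$. If $D(V)$ is dense in $V$, then the $\kappa$-boundedness of $\alpha|_{D(V)}$ is equivalent to the $\kappa$-boundedness of $\alpha$.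
   Context: A locally convex euclidean space is a real locally convex space with a continuous positive definite symmetric bilinear form $\kappa$. The double extension $\mathfrak g(V,\kappa,D)=\mathbb R\times V\times\mathbb R$ has bracket $[(z,v,t),(z',v',t')]=(\kappa(Dv,v'),tDv'-t'Dv,0)$; it is the Lie algebra of the group $G=\mathbb R\times V\times\mathbb R$ with $(z,v,t)(z',v',t')=(z+z'+\frac12\omega_D(v,\gamma(t)v'),v+\gamma(t)v',t+t')$. Elements of $\mathfrak g'$ are written $(z^*,\alpha,t^* )$, meaning $(z,x,t)\mapsto z^*z+\alpha(x)+t^*t$, $\alpha\in V'$. Coadjoint orbits are $\mathrm{Ad}^*(G)$-orbits; non-trivial means not a single point; $E\subseteq\mathfrak g'$ is semi-equicontinuous if $y\mapsto\sup\langle E,-y\rangle$ is bounded on a neighborhood of some point. A linear form $\beta$ on a subspace of $V$ is $\kappa$-bounded if $\sup\{|\beta(v)|:\kappa(v,v)\le1\}<\infty$. *)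

theory Defs
  imports "HOL-Analysis.Analysis" "HOL-Library.Extended_Real"
begin

class real_tvs = real_vector + t2_space +
  assumes tvs_add_continuous:
    "\<And>x y::'a. ((\<lambda>p. fst p + snd p) \<longlongrightarrow> x + y) (nhds x \<times>\<^sub>F nhds y)"
  assumes tvs_scaleR_continuous:
    "\<And>(a::real) (x::'a). ((\<lambda>p. fst p *\<^sub>R snd p) \<longlongrightarrow> a *\<^sub>R x) (nhds a \<times>\<^sub>F nhds x)"

class locally_convex = real_tvs +
  assumes locally_convex:
    "\<And>U::'a set. open U \<Longrightarrow> 0 \<in> U \<Longrightarrow> \<exists>C. open C \<and> 0 \<in> C \<and> C \<subseteq> U \<and>
          (\<forall>x\<in>C. \<forall>y\<in>C. \<forall>u::real. 0 \<le> u \<and> u \<le> 1 \<longrightarrow> (1 - u) *\<^sub>R x + u *\<^sub>R y \<in> C)"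

definition lc_euclidean_form :: "('v::locally_convex \<Rightarrow> 'v \<Rightarrow> real) \<Rightarrow> bool" where
  "lc_euclidean_form \<kappa> \<longleftrightarrow>
     (\<forall>x. linear (\<kappa> x)) \<and> (\<forall>x y. \<kappa> x y = \<kappa> y x) \<and>
     (\<forall>x. x \<noteq> 0 \<longrightarrow> \<kappa> x x > 0) \<and>
     continuous_on UNIV (\<lambda>p::'v \<times> 'v. \<kappa> (fst p) (snd p))"

text \<open>Iterated directional derivatives: iter_deriv k f x hs is
  $d^k f(x)(h_0,\dots,h_{k-1})$ where $h_i$ = hs i.\<close>

fun iter_deriv :: "nat \<Rightarrow> ('a::real_vector \<Rightarrow> 'b::{real_vector,t2_space}) \<Rightarrow> 'a \<Rightarrow> (nat \<Rightarrow> 'a) \<Rightarrow> 'b" where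
  "iter_deriv 0 f x hs = f x"
| "iter_deriv (Suc k) f x hs =
     Lim (at (0::real)) (\<lambda>t. (1 / t) *\<^sub>R (iter_deriv k f (x + t *\<^sub>R hs k) hs - iter_deriv k f x hs))"

text \<open>$C^\infty$ in the sense of Bastiani: all iterated directional derivatives exist and
  $(x,h_0,\dots,h_{k-1}) \mapsto d^k f(x)(h_0,\dots,h_{k-1})$ is continuous for every $k$
  (continuity is taken w.r.t. the product topology on 'a \<times> (nat \<Rightarrow> 'a); since
  iter_deriv k only depends on the first k directions this is the same as continuity
  on 'a \<times> 'a^k).\<close>

definition smooth_map :: "('a::{real_vector,topological_space} \<Rightarrow> 'b::{real_vector,t2_space}) \<Rightarrow> bool" where
  "smooth_map f \<longleftrightarrow>
     (\<forall>k. (\<forall>x hs. ((\<lambda>t. (1 / t) *\<^sub>R (iter_deriv k f (x + t *\<^sub>R hs k) hs - iter_deriv k f x hs))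
                     \<longlongrightarrow> iter_deriv (Suc k) f x hs) (at (0::real)))
        \<and> continuous_on UNIV (\<lambda>p::'a \<times> (nat \<Rightarrow> 'a). iter_deriv k f (fst p) (snd p)))"

definition skew_generator ::
  "('v::locally_convex \<Rightarrow> 'v \<Rightarrow> real) \<Rightarrow> ('v \<Rightarrow> 'v) \<Rightarrow> (real \<Rightarrow> 'v \<Rightarrow> 'v) \<Rightarrow> bool" where
  "skew_generator \<kappa> D \<gamma> \<longleftrightarrow>
     linear D \<and> continuous_on UNIV D \<and> (\<forall>x y. \<kappa> (D x) y = - \<kappa> x (D y)) \<and>
     \<comment> \<open>one-parameter group of \<kappa>-orthogonal continuous linear operators\<close>
     (\<forall>t. linear (\<gamma> t) \<and> continuous_on UNIV (\<gamma> t)) \<and>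
     (\<forall>t x y. \<kappa> (\<gamma> t x) (\<gamma> t y) = \<kappa> x y) \<and>
     \<gamma> 0 = id \<and> (\<forall>s t. \<gamma> (s + t) = \<gamma> s \<circ> \<gamma> t) \<and>
     \<comment> \<open>smooth action\<close>
     smooth_map (\<lambda>p::real \<times> 'v. \<gamma> (fst p) (snd p)) \<and>
     \<comment> \<open>with generator D\<close>
     (\<forall>v. ((\<lambda>h. (1 / h) *\<^sub>R (\<gamma> h v - v)) \<longlongrightarrow> D v) (at 0))"

definition omegaD :: "('v \<Rightarrow> 'v \<Rightarrow> real) \<Rightarrow> ('v \<Rightarrow> 'v) \<Rightarrow> 'v \<Rightarrow> 'v \<Rightarrow> real" where
  "omegaD \<kappa> D x y = \<kappa> (D x) y"

definition gmult ::
  "('v::locally_convex \<Rightarrow> 'v \<Rightarrow> real) \<Rightarrow> ('v \<Rightarrow> 'v) \<Rightarrow> (real \<Rightarrow> 'v \<Rightarrow> 'v)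
     \<Rightarrow> real \<times> 'v \<times> real \<Rightarrow> real \<times> 'v \<times> real \<Rightarrow> real \<times> 'v \<times> real" where
  "gmult \<kappa> D \<gamma> g h = (case g of (z, v, t) \<Rightarrow> case h of (z', v', t') \<Rightarrow>
      (z + z' + (1/2) * omegaD \<kappa> D v (\<gamma> t v'), v + \<gamma> t v', t + t'))"

definition ginv ::
  "('v::locally_convex \<Rightarrow> 'v \<Rightarrow> real) \<Rightarrow> ('v \<Rightarrow> 'v) \<Rightarrow> (real \<Rightarrow> 'v \<Rightarrow> 'v)
     \<Rightarrow> real \<times> 'v \<times> real \<Rightarrow> real \<times> 'v \<times> real" where
  "ginv \<kappa> D \<gamma> g = (THE h. gmult \<kappa> D \<gamma> g h = 0 \<and> gmult \<kappa> D \<gamma> h g = 0)"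

definition gconj where
  "gconj \<kappa> D \<gamma> g x = gmult \<kappa> D \<gamma> (gmult \<kappa> D \<gamma> g x) (ginv \<kappa> D \<gamma> g)"

definition Ad ::
  "('v::locally_convex \<Rightarrow> 'v \<Rightarrow> real) \<Rightarrow> ('v \<Rightarrow> 'v) \<Rightarrow> (real \<Rightarrow> 'v \<Rightarrow> 'v)
     \<Rightarrow> real \<times> 'v \<times> real \<Rightarrow> real \<times> 'v \<times> real \<Rightarrow> real \<times> 'v \<times> real" where
  "Ad \<kappa> D \<gamma> g x = Lim (at (0::real)) (\<lambda>s. (1 / s) *\<^sub>R gconj \<kappa> D \<gamma> g (s *\<^sub>R x))"

definition coadjoint_orbit ::
  "('v::locally_convex \<Rightarrow> 'v \<Rightarrow> real) \<Rightarrow> ('v \<Rightarrow> 'v) \<Rightarrow> (real \<Rightarrow> 'v \<Rightarrow> 'v)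
     \<Rightarrow> (real \<times> 'v \<times> real \<Rightarrow> real) \<Rightarrow> (real \<times> 'v \<times> real \<Rightarrow> real) set" where
  "coadjoint_orbit \<kappa> D \<gamma> lam = {lam \<circ> Ad \<kappa> D \<gamma> (ginv \<kappa> D \<gamma> g) | g. True}"

definition nontrivial_set :: "'a set \<Rightarrow> bool" where
  "nontrivial_set E \<longleftrightarrow> \<not> (\<exists>a. E = {a})"

definition semi_equicontinuous :: "('g::{topological_space,uminus} \<Rightarrow> real) set \<Rightarrow> bool" where
  "semi_equicontinuous E \<longleftrightarrow>
     (\<exists>y0 U (C::real). open U \<and> y0 \<in> U \<and>
        (\<forall>y\<in>U. \<bar>SUP \<mu>\<in>E. ereal (\<mu> (- y))\<bar> \<le> ereal C))"

definition kappa_bounded :: "('v \<Rightarrow> 'v \<Rightarrow> real) \<Rightarrow> 'v set \<Rightarrow> ('v \<Rightarrow> real) \<Rightarrow> bool" where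
  "kappa_bounded \<kappa> W \<beta> \<longleftrightarrow> (\<exists>C::real. \<forall>v\<in>W. \<kappa> v v \<le> 1 \<longrightarrow> \<bar>\<beta> v\<bar> \<le> C)"

end

theory Submission
  imports Defs
begin

text \<open>
  Every element of the coadjoint orbit of \<open>\<lambda> = (z\<^sup>*, \<alpha>, t\<^sup>*)\<close> is \<open>\<lambda> \<circ> Ad(0, v, t)\<close>, and its value at
  \<open>-(a, w, r)\<close> is \<open>z\<^sup>* r/2 \<kappa>(Dv, Dv) - z\<^sup>* \<kappa>(Dv, \<gamma>\<^sub>t w) + r \<alpha>(Dv) - \<alpha>(\<gamma>\<^sub>t w) - z\<^sup>* a - t\<^sup>* r\<close>.
  Semi-equicontinuity bounds these values from above near some point; replacing \<open>v\<close> by \<open>L v\<close>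
  gives a real quadratic in \<open>L\<close> that is bounded above, so its discriminant is controlled.
  This forces \<open>z\<^sup>* r < 0\<close> and the \<open>\<kappa>\<close>-boundedness of \<open>\<alpha>\<close> on \<open>D(V)\<close>, while \<open>z\<^sup>* = 0\<close> would give
  \<open>\<alpha> \<circ> D = 0\<close>, hence a \<open>\<gamma>\<close>-invariant \<open>\<alpha>\<close> and a trivial orbit. Conversely, for \<open>z\<^sup>* r < 0\<close> the
  negative quadratic term dominates; the one term not controlled by \<open>\<kappa>\<close> is \<open>\<alpha>(\<gamma>\<^sub>t w - w)\<close>, which is
  bounded by writing \<open>\<gamma>\<^sub>t w - w\<close> as \<open>D\<close> of a Riemann sum of \<open>\<gamma>\<^sub>s w\<close> plus a small error
  (\<open>V\<close> need not be complete, so \<open>\<integral>\<^sub>0\<^sup>t \<gamma>\<^sub>s w ds\<close> itself may not exist).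
\<close>

lemma tvs_tendsto_uminus: "(uminus \<longlongrightarrow> - a) (nhds (a::'a::real_tvs))"
proof -
  have "((\<lambda>x::'a. ((-1::real), x)) \<longlongrightarrow> (-1, a)) (nhds a)"
    by (intro tendsto_Pair tendsto_const filterlim_ident)
  from filterlim_compose[OF tvs_scaleR_continuous[of "-1" a, folded nhds_prod] this]
  show ?thesis by simp
qed

instance real_tvs \<subseteq> topological_ab_group_add
  by standard (rule tvs_add_continuous, rule tvs_tendsto_uminus)

lemma tvs_tendsto_scaleR:
  fixes g :: "_ \<Rightarrow> 'a::real_tvs"
  assumes "(f \<longlongrightarrow> a) F" and "(g \<longlongrightarrow> x) F"
  shows "((\<lambda>y. f y *\<^sub>R g y) \<longlongrightarrow> a *\<^sub>R x) F"
  using filterlim_compose[OF tvs_scaleR_continuous[of a x, folded nhds_prod] tendsto_Pair[OF assms]]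
  by simp

lemma quadratic_bounded_above:
  fixes b c d M :: real
  assumes bounded: "\<And>L. c * L\<^sup>2 + b * L + d \<le> M"
  shows "c \<le> 0" and "b\<^sup>2 \<le> 4 * (- c) * (M - d)"
proof -
  show "c \<le> 0"
  proof (rule ccontr)
    assume "\<not> c \<le> 0"
    define L where "L = sqrt ((\<bar>M - d\<bar> + 1) / c)"
    have "c * L\<^sup>2 = \<bar>M - d\<bar> + 1" using \<open>\<not> c \<le> 0\<close> by (simp add: L_def)
    \<comment> \<open>averaging the bound at L and -L kills the linear term\<close>
    moreover have "c * L\<^sup>2 + b * L + d \<le> M" "c * (- L)\<^sup>2 + b * (- L) + d \<le> M" by (rule bounded)+
    ultimately show False by simp
  qed
  show "b\<^sup>2 \<le> 4 * (- c) * (M - d)"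
  proof (cases "c = 0")
    case True
    show ?thesis
    proof (rule ccontr)
      assume "\<not> ?thesis"
      then have "b\<^sup>2 > 0" using True by simp
      have "c * ((\<bar>M - d\<bar> + 1) / b)\<^sup>2 + b * ((\<bar>M - d\<bar> + 1) / b) + d \<le> M" by (rule bounded)
      then show False using True \<open>b\<^sup>2 > 0\<close> by simp
    qed
  next
    case False
    with \<open>c \<le> 0\<close> have "c < 0" by simp
    have "c * (b / (- 2 * c))\<^sup>2 + b * (b / (- 2 * c)) + d \<le> M" by (rule bounded)
    then have "b\<^sup>2 / (4 * (- c)) \<le> M - d"
      using \<open>c < 0\<close> by (simp add: power2_eq_square field_simps)
    moreover have "4 * (- c) > 0" using \<open>c < 0\<close> by simp
    ultimately show ?thesis by (metis pos_divide_le_eq mult.commute)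
  qed
qed

lemma concave_quadratic_le:
  fixes a b x :: real
  assumes "a > 0"
  shows "b * x - a * x\<^sup>2 \<le> b\<^sup>2 / (4 * a)"
proof -
  have "0 \<le> a * (x - b / (2 * a))\<^sup>2" using assms by simp
  also have "\<dots> = a * x\<^sup>2 - b * x + b\<^sup>2 / (4 * a)"
    using assms by (simp add: power2_eq_square field_simps)
  finally show ?thesis by simp
qed

lemma mult_le_abs_mult_bound:
  fixes x y B :: real
  assumes "\<bar>y\<bar> \<le> B"
  shows "x * y \<le> \<bar>x\<bar> * B" and "- (x * y) \<le> \<bar>x\<bar> * B"
proof -
  have "\<bar>x * y\<bar> \<le> \<bar>x\<bar> * B" unfolding abs_mult using assms by (rule mult_left_mono) simp
  then show "x * y \<le> \<bar>x\<bar> * B" and "- (x * y) \<le> \<bar>x\<bar> * B" by linarith+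
qed

lemma semi_equicontinuousD:
  assumes "semi_equicontinuous E"
  obtains U y0 C where "open U" and "y0 \<in> U" and "\<And>y \<mu>. y \<in> U \<Longrightarrow> \<mu> \<in> E \<Longrightarrow> \<mu> (- y) \<le> C"
proof -
  from assms obtain y0 U C where "open U" "y0 \<in> U"
    and C: "\<And>y. y \<in> U \<Longrightarrow> \<bar>SUP \<mu>\<in>E. ereal (\<mu> (- y))\<bar> \<le> ereal C"
    unfolding semi_equicontinuous_def by blast
  moreover have "\<mu> (- y) \<le> C" if "y \<in> U" "\<mu> \<in> E" for y \<mu>
  proof -
    have "ereal (\<mu> (- y)) \<le> (SUP \<mu>\<in>E. ereal (\<mu> (- y)))" using that(2) by (rule SUP_upper)
    also have "\<dots> \<le> \<bar>SUP \<mu>\<in>E. ereal (\<mu> (- y))\<bar>" by (cases "SUP \<mu>\<in>E. ereal (\<mu> (- y))") auto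
    also have "\<dots> \<le> ereal C" using C that(1) by blast
    finally show ?thesis by simp
  qed
  ultimately show ?thesis using that by blast
qed

lemma semi_equicontinuousI:
  assumes "open U" and "p \<in> U"
    and lower: "\<And>y. y \<in> U \<Longrightarrow> \<exists>\<mu>\<in>E. - C \<le> \<mu> (- y)"
    and upper: "\<And>y \<mu>. y \<in> U \<Longrightarrow> \<mu> \<in> E \<Longrightarrow> \<mu> (- y) \<le> C"
  shows "semi_equicontinuous E"
proof -
  have "\<bar>SUP \<mu>\<in>E. ereal (\<mu> (- y))\<bar> \<le> ereal C" if y: "y \<in> U" for y
  proof -
    obtain \<mu> where "\<mu> \<in> E" "- C \<le> \<mu> (- y)" using lower[OF y] by blast
    then have "ereal (- C) \<le> (SUP \<mu>\<in>E. ereal (\<mu> (- y)))"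
      by (intro order_trans[OF _ SUP_upper]) auto
    moreover have "(SUP \<mu>\<in>E. ereal (\<mu> (- y))) \<le> ereal C"
      using upper[OF y] by (intro SUP_least) simp
    ultimately show ?thesis by (cases "SUP \<mu>\<in>E. ereal (\<mu> (- y))") auto
  qed
  with assms(1,2) show ?thesis unfolding semi_equicontinuous_def by blast
qed

section \<open>Locally convex euclidean spaces\<close>

locale euclidean_form =
  fixes \<kappa> :: "'v::locally_convex \<Rightarrow> 'v \<Rightarrow> real"
  assumes euclidean: "lc_euclidean_form \<kappa>"
begin

lemma linear_kappa: "linear (\<kappa> x)"
  and kappa_commute: "\<kappa> x y = \<kappa> y x"
  and kappa_self_pos: "x \<noteq> 0 \<Longrightarrow> \<kappa> x x > 0"
  and continuous_kappa: "continuous_on UNIV (\<lambda>p::'v \<times> 'v. \<kappa> (fst p) (snd p))"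
  using euclidean unfolding lc_euclidean_form_def by blast+

lemma kappa_add_right: "\<kappa> x (y + z) = \<kappa> x y + \<kappa> x z"
  and kappa_scaleR_right: "\<kappa> x (c *\<^sub>R y) = c * \<kappa> x y"
  and kappa_diff_right: "\<kappa> x (y - z) = \<kappa> x y - \<kappa> x z"
  and kappa_minus_right: "\<kappa> x (- y) = - \<kappa> x y"
  and kappa_zero_right: "\<kappa> x 0 = 0"
  using linear_kappa[of x] by (simp_all add: linear_add linear_cmul linear_diff linear_neg linear_0)

lemma kappa_add_left: "\<kappa> (y + z) x = \<kappa> y x + \<kappa> z x"
  and kappa_scaleR_left: "\<kappa> (c *\<^sub>R y) x = c * \<kappa> y x"
  and kappa_diff_left: "\<kappa> (y - z) x = \<kappa> y x - \<kappa> z x"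
  and kappa_minus_left: "\<kappa> (- y) x = - \<kappa> y x"
  and kappa_zero_left: "\<kappa> 0 x = 0"
  by (simp_all only: kappa_commute[of _ x] kappa_add_right kappa_scaleR_right
      kappa_diff_right kappa_minus_right kappa_zero_right)

lemmas kappa_simps = kappa_add_right kappa_scaleR_right kappa_diff_right kappa_minus_right
  kappa_zero_right kappa_add_left kappa_scaleR_left kappa_diff_left kappa_minus_left kappa_zero_left

lemma kappa_self_nonneg: "\<kappa> x x \<ge> 0"
  using kappa_self_pos[of x] by (cases "x = 0") (auto simp: kappa_simps)

lemma tendsto_kappa:
  assumes "(f \<longlongrightarrow> x) F" and "(g \<longlongrightarrow> y) F"
  shows "((\<lambda>s. \<kappa> (f s) (g s)) \<longlongrightarrow> \<kappa> x y) F"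
  using continuous_on_tendsto_compose[OF continuous_kappa tendsto_Pair[OF assms]] by simp

lemma continuous_on_kappa_self: "continuous_on UNIV (\<lambda>x. \<kappa> x x)"
  using continuous_on_compose2[OF continuous_kappa continuous_on_Pair[OF continuous_on_id continuous_on_id]]
  by simp

definition knorm :: "'v \<Rightarrow> real" where
  "knorm x = sqrt (\<kappa> x x)"

lemma knorm_nonneg: "knorm x \<ge> 0"
  and knorm_power2: "(knorm x)\<^sup>2 = \<kappa> x x"
  and knorm_zero: "knorm 0 = 0"
  and knorm_minus: "knorm (- x) = knorm x"
  by (simp_all add: knorm_def kappa_self_nonneg kappa_simps)

lemma knorm_scaleR: "knorm (c *\<^sub>R x) = \<bar>c\<bar> * knorm x"
  by (simp add: knorm_def kappa_simps real_sqrt_mult mult.assoc[symmetric] power2_eq_square[symmetric])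

lemma continuous_on_knorm: "continuous_on UNIV knorm"
  unfolding knorm_def by (intro continuous_on_kappa_self continuous_intros)

lemma kappa_Cauchy_Schwarz: "\<bar>\<kappa> x y\<bar> \<le> knorm x * knorm y"
proof (cases "x = 0")
  case True
  then show ?thesis by (simp add: kappa_simps knorm_zero)
next
  case False
  then have p: "\<kappa> x x > 0" by (rule kappa_self_pos)
  define c where "c = \<kappa> x y / \<kappa> x x"
  have "0 \<le> \<kappa> (y - c *\<^sub>R x) (y - c *\<^sub>R x)" by (rule kappa_self_nonneg)
  also have "\<dots> = \<kappa> y y - (\<kappa> x y)\<^sup>2 / \<kappa> x x"
    using p by (simp add: c_def kappa_simps kappa_commute[of y x] power2_eq_square field_simps)
  finally have "(\<kappa> x y)\<^sup>2 \<le> \<kappa> x x * \<kappa> y y"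
    using p by (simp add: field_simps)
  then have "sqrt ((\<kappa> x y)\<^sup>2) \<le> sqrt (\<kappa> x x * \<kappa> y y)" by (rule real_sqrt_le_mono)
  then show ?thesis by (simp add: knorm_def real_sqrt_mult)
qed

lemma knorm_triangle: "knorm (x + y) \<le> knorm x + knorm y"
proof -
  have "(knorm (x + y))\<^sup>2 = \<kappa> x x + 2 * \<kappa> x y + \<kappa> y y"
    by (simp add: knorm_power2 kappa_simps kappa_commute[of y x])
  also have "\<dots> \<le> (knorm x + knorm y)\<^sup>2"
    using kappa_Cauchy_Schwarz[of x y] by (simp add: power2_eq_square algebra_simps flip: knorm_power2)
  finally show ?thesis
    using knorm_nonneg[of x] knorm_nonneg[of y] by (simp add: power2_le_iff_abs_le)
qed

lemma knorm_diff: "knorm (x - y) \<le> knorm x + knorm y"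
  using knorm_triangle[of x "- y"] by (simp add: knorm_minus)

lemma knorm_sum: "knorm (sum f A) \<le> (\<Sum>i\<in>A. knorm (f i))"
  by (induction A rule: infinite_finite_induct)
    (auto simp: knorm_zero intro: order_trans[OF knorm_triangle])

lemma kappa_bounded_imp_le_knorm:
  assumes "linear \<beta>" and "kappa_bounded \<kappa> W \<beta>" and "subspace W"
  obtains C where "C \<ge> 0" and "\<And>x. x \<in> W \<Longrightarrow> \<bar>\<beta> x\<bar> \<le> C * knorm x"
proof -
  from assms(2) obtain C where C: "\<And>x. x \<in> W \<Longrightarrow> \<kappa> x x \<le> 1 \<Longrightarrow> \<bar>\<beta> x\<bar> \<le> C"
    unfolding kappa_bounded_def by blast
  have C_nonneg: "C \<ge> 0"
    using C[OF subspace_0[OF assms(3)]] assms(1) by (simp add: kappa_simps linear_0)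
  have "\<bar>\<beta> x\<bar> \<le> C * knorm x" if x: "x \<in> W" for x
  proof (cases "x = 0")
    case True
    then show ?thesis using assms(1) C_nonneg by (simp add: linear_0 knorm_zero)
  next
    case False
    define n where "n = knorm x"
    have n: "n > 0" using kappa_self_pos[OF False] by (simp add: n_def knorm_def)
    have "\<kappa> ((1 / n) *\<^sub>R x) ((1 / n) *\<^sub>R x) = 1"
      using n knorm_power2[of x] kappa_self_pos[OF False] by (simp add: kappa_simps n_def power2_eq_square)
    then have "\<bar>\<beta> ((1 / n) *\<^sub>R x)\<bar> \<le> C" by (intro C subspace_mul[OF assms(3) x]) simp
    then have "\<bar>\<beta> x\<bar> / n \<le> C" using n assms(1) by (simp add: linear_cmul abs_mult)
    then show ?thesis using n by (simp add: n_def pos_divide_le_eq mult.commute)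
  qed
  with C_nonneg that show ?thesis by blast
qed

lemma kappa_bounded_dense:
  assumes "linear \<beta>" and "continuous_on UNIV \<beta>"
    and "closure W = UNIV" and "kappa_bounded \<kappa> W \<beta>"
  shows "kappa_bounded \<kappa> UNIV \<beta>"
proof -
  from assms(4) obtain C where C: "\<And>x. x \<in> W \<Longrightarrow> \<kappa> x x \<le> 1 \<Longrightarrow> \<bar>\<beta> x\<bar> \<le> C"
    unfolding kappa_bounded_def by blast
  have "\<bar>\<beta> v\<bar> \<le> 2 * (C + 1)" if "\<kappa> v v \<le> 1" for v
  proof -
    define u where "u = (1/2) *\<^sub>R v"
    \<comment> \<open>halving moves v into the open unit ball, where W comes arbitrarily close to it\<close>
    define A where "A = {x. \<kappa> x x < 1 \<and> \<bar>\<beta> x - \<beta> u\<bar> < 1}"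
    have "open A" unfolding A_def
      by (intro open_Collect_conj open_Collect_less continuous_on_kappa_self continuous_intros
          continuous_on_compose2[OF assms(2) _ subset_UNIV])
    moreover have "u \<in> A" using that by (simp add: A_def u_def kappa_simps)
    ultimately obtain x where "x \<in> W" "x \<in> A"
      using assms(3) closure_iff_nhds_not_empty[of u W] by blast
    then have "\<bar>\<beta> u\<bar> \<le> C + 1" using C[of x] by (force simp: A_def)
    moreover have "\<beta> v = 2 * \<beta> u" using assms(1) by (simp add: u_def linear_cmul)
    ultimately show ?thesis by simp
  qed
  then show ?thesis unfolding kappa_bounded_def by blast
qed

end

section \<open>The double extension and its coadjoint orbits\<close>

abbreviation dual_triple :: "real \<Rightarrow> ('v \<Rightarrow> real) \<Rightarrow> real \<Rightarrow> real \<times> 'v \<times> real \<Rightarrow> real" where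
  "dual_triple zs \<alpha> ts \<equiv> \<lambda>(z, x, t). zs * z + \<alpha> x + ts * t"

locale double_extension = euclidean_form \<kappa>
  for \<kappa> :: "'v::locally_convex \<Rightarrow> 'v \<Rightarrow> real" +
  fixes D :: "'v \<Rightarrow> 'v" and \<gamma> :: "real \<Rightarrow> 'v \<Rightarrow> 'v"
  assumes skew_generator: "skew_generator \<kappa> D \<gamma>"
begin

lemma linear_D: "linear D"
  and D_skew: "\<kappa> (D x) y = - \<kappa> x (D y)"
  and linear_gamma: "linear (\<gamma> t)"
  and continuous_on_gamma: "continuous_on UNIV (\<gamma> t)"
  and kappa_gamma: "\<kappa> (\<gamma> t x) (\<gamma> t y) = \<kappa> x y"
  and gamma_zero: "\<gamma> 0 x = x"
  and gamma_add: "\<gamma> (s + t) x = \<gamma> s (\<gamma> t x)"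
  and smooth_gamma: "smooth_map (\<lambda>p::real \<times> 'v. \<gamma> (fst p) (snd p))"
  and gamma_generator: "((\<lambda>h. (1 / h) *\<^sub>R (\<gamma> h v - v)) \<longlongrightarrow> D v) (at 0)"
  using skew_generator unfolding skew_generator_def fun_eq_iff comp_apply id_apply by blast+

lemma D_add: "D (x + y) = D x + D y"
  and D_scaleR: "D (c *\<^sub>R x) = c *\<^sub>R D x"
  and D_diff: "D (x - y) = D x - D y"
  and D_minus: "D (- x) = - D x"
  and D_zero: "D 0 = 0"
  using linear_D by (simp_all add: linear_add linear_cmul linear_diff linear_neg linear_0)

lemma gamma_add_right: "\<gamma> t (x + y) = \<gamma> t x + \<gamma> t y"
  and gamma_scaleR: "\<gamma> t (c *\<^sub>R x) = c *\<^sub>R \<gamma> t x"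
  and gamma_diff: "\<gamma> t (x - y) = \<gamma> t x - \<gamma> t y"
  and gamma_minus: "\<gamma> t (- x) = - \<gamma> t x"
  and gamma_zero_right: "\<gamma> t 0 = 0"
  using linear_gamma[of t] by (simp_all add: linear_add linear_cmul linear_diff linear_neg linear_0)

lemmas linear_simps = D_add D_scaleR D_diff D_minus D_zero
  gamma_add_right gamma_scaleR gamma_diff gamma_minus gamma_zero_right

lemma kappa_D_self: "\<kappa> (D x) x = 0"
  using D_skew[of x x] kappa_commute[of x "D x"] by simp

lemma gamma_uminus_cancel: "\<gamma> (- t) (\<gamma> t x) = x" "\<gamma> t (\<gamma> (- t) x) = x"
  using gamma_add[of "-t" t x] gamma_add[of t "-t" x] by (simp_all add: gamma_zero)

lemma knorm_gamma: "knorm (\<gamma> t x) = knorm x"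
  by (simp add: knorm_def kappa_gamma)

lemma D_gamma_commute: "D (\<gamma> s v) = \<gamma> s (D v)"
proof -
  have "((\<lambda>h. \<gamma> s ((1 / h) *\<^sub>R (\<gamma> h v - v))) \<longlongrightarrow> \<gamma> s (D v)) (at 0)"
    using continuous_on_tendsto_compose[OF continuous_on_gamma gamma_generator] by simp
  moreover have "\<gamma> s ((1 / h) *\<^sub>R (\<gamma> h v - v)) = (1 / h) *\<^sub>R (\<gamma> h (\<gamma> s v) - \<gamma> s v)" for h
    using gamma_add[of h s v] gamma_add[of s h v] by (simp add: linear_simps add.commute)
  ultimately show ?thesis
    using tendsto_unique[OF trivial_limit_at gamma_generator] by simp
qed

lemma continuous_on_gamma_joint: "continuous_on UNIV (\<lambda>p::real \<times> 'v. \<gamma> (fst p) (snd p))"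
proof -
  have "continuous_on UNIV (\<lambda>p::(real \<times> 'v) \<times> (nat \<Rightarrow> real \<times> 'v).
      iter_deriv 0 (\<lambda>p. \<gamma> (fst p) (snd p)) (fst p) (snd p))"
    using smooth_gamma unfolding smooth_map_def by blast
  then have "continuous_on UNIV (\<lambda>p::(real \<times> 'v) \<times> (nat \<Rightarrow> real \<times> 'v). \<gamma> (fst (fst p)) (snd (fst p)))"
    by (simp only: iter_deriv.simps)
  from continuous_on_compose2[OF this continuous_on_Pair[OF continuous_on_id continuous_on_const]]
  show ?thesis by simp
qed

lemma tendsto_gamma:
  assumes "(f \<longlongrightarrow> s) F" and "(g \<longlongrightarrow> x) F"
  shows "((\<lambda>y. \<gamma> (f y) (g y)) \<longlongrightarrow> \<gamma> s x) F"
  using continuous_on_tendsto_compose[OF continuous_on_gamma_joint tendsto_Pair[OF assms]] by simp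

lemma ginv_eq: "ginv \<kappa> D \<gamma> (z, v, t) = (- z, - \<gamma> (- t) v, - t)"
  unfolding ginv_def
proof (rule the_equality)
  fix h assume "gmult \<kappa> D \<gamma> (z, v, t) h = 0 \<and> gmult \<kappa> D \<gamma> h (z, v, t) = 0"
  moreover obtain z' v' t' where h: "h = (z', v', t')" by (cases h) auto
  ultimately have z: "z + z' + 1/2 * \<kappa> (D v) (\<gamma> t v') = 0" and v: "\<gamma> t v' = - v" and "t' = - t"
    unfolding gmult_def omegaD_def by (simp_all add: zero_prod_def eq_neg_iff_add_eq_0 add.commute)
  moreover have "v' = - \<gamma> (- t) v"
    using arg_cong[OF v, of "\<gamma> (- t)"] by (simp add: gamma_uminus_cancel linear_simps)
  moreover have "z' = - z" using z by (simp add: v kappa_simps kappa_D_self)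
  ultimately show "h = (- z, - \<gamma> (- t) v, - t)" unfolding h by simp
qed (simp add: gmult_def omegaD_def linear_simps kappa_simps gamma_uminus_cancel kappa_D_self zero_prod_def)

lemma gconj_eq: "gconj \<kappa> D \<gamma> (z, v, t) (a, w, r) =
   (a + 1/2 * \<kappa> (D v) (\<gamma> t w) - 1/2 * \<kappa> (D (v + \<gamma> t w)) (\<gamma> r v), v + \<gamma> t w - \<gamma> r v, r)"
proof -
  have "\<gamma> (t + r) (\<gamma> (- t) v) = \<gamma> r v" "\<gamma> (r + t) (\<gamma> (- t) v) = \<gamma> r v"
    by (metis add.commute gamma_add gamma_uminus_cancel(2))+
  then show ?thesis
    unfolding gconj_def ginv_eq gmult_def omegaD_def
    by (simp add: linear_simps kappa_simps algebra_simps)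
qed

lemma tendsto_gamma_quotient_scaled:
  "((\<lambda>s. (1 / s) *\<^sub>R (\<gamma> (s * r) v - v)) \<longlongrightarrow> r *\<^sub>R D v) (at 0)"
proof (cases "r = 0")
  case True
  then show ?thesis by (simp add: gamma_zero)
next
  case False
  have "filterlim (\<lambda>s::real. s * r) (at 0) (at 0)"
    using False by (intro filterlim_atI) (auto intro!: tendsto_eq_intros simp: eventually_at_filter)
  from tvs_tendsto_scaleR[OF tendsto_const filterlim_compose[OF gamma_generator this], of r]
  show ?thesis using False by simp
qed

lemma Ad_eq: "Ad \<kappa> D \<gamma> (z, v, t) (a, w, r) =
   (a + \<kappa> (D v) (\<gamma> t w) - r / 2 * \<kappa> (D v) (D v), \<gamma> t w - r *\<^sub>R D v, r)"
proof -
  define Q where "Q s = (1 / s) *\<^sub>R (\<gamma> (s * r) v - v)" for s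
  define F where "F s = (a + 1/2 * \<kappa> (D v) (\<gamma> t w) - 1/2 * \<kappa> (D v) (Q s)
    - 1/2 * \<kappa> (D (\<gamma> t w)) (\<gamma> (s * r) v), \<gamma> t w - Q s, r)" for s
  have "((\<lambda>s. \<gamma> (s * r) v) \<longlongrightarrow> v) (at 0)"
    using tendsto_gamma[OF tendsto_mult_left_zero[OF tendsto_ident_at] tendsto_const] by (simp add: gamma_zero)
  then have "(F \<longlongrightarrow> (a + 1/2 * \<kappa> (D v) (\<gamma> t w) - 1/2 * \<kappa> (D v) (r *\<^sub>R D v)
      - 1/2 * \<kappa> (D (\<gamma> t w)) v, \<gamma> t w - r *\<^sub>R D v, r)) (at 0)"
    unfolding F_def Q_def by (intro tendsto_intros tendsto_kappa tendsto_gamma_quotient_scaled)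
  moreover have "\<kappa> (D (\<gamma> t w)) v = - \<kappa> (D v) (\<gamma> t w)"
    using D_skew[of "\<gamma> t w" v] kappa_commute by simp
  ultimately have "(F \<longlongrightarrow> (a + \<kappa> (D v) (\<gamma> t w) - r / 2 * \<kappa> (D v) (D v), \<gamma> t w - r *\<^sub>R D v, r)) (at 0)"
    by (simp add: kappa_simps algebra_simps)
  moreover have "F s = (1 / s) *\<^sub>R gconj \<kappa> D \<gamma> (z, v, t) (s *\<^sub>R (a, w, r))" if "s \<noteq> 0" for s
    using that unfolding F_def Q_def
    by (simp add: gconj_eq linear_simps kappa_simps kappa_D_self algebra_simps mult.commute[of s r])
  then have "\<forall>\<^sub>F s in at 0. F s = (1 / s) *\<^sub>R gconj \<kappa> D \<gamma> (z, v, t) (s *\<^sub>R (a, w, r))"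
    by (simp add: eventually_at_filter)
  ultimately have "((\<lambda>s. (1 / s) *\<^sub>R gconj \<kappa> D \<gamma> (z, v, t) (s *\<^sub>R (a, w, r))) \<longlongrightarrow>
      (a + \<kappa> (D v) (\<gamma> t w) - r / 2 * \<kappa> (D v) (D v), \<gamma> t w - r *\<^sub>R D v, r)) (at 0)"
    by (rule Lim_transform_eventually)
  then show ?thesis unfolding Ad_def by (rule tendsto_Lim[OF trivial_limit_at])
qed

lemma coadjoint_orbit_eq:
  "coadjoint_orbit \<kappa> D \<gamma> lam = {lam \<circ> Ad \<kappa> D \<gamma> (0, v, t) | v t. True}"
proof (rule set_eqI, rule iffI)
  fix \<mu> assume "\<mu> \<in> coadjoint_orbit \<kappa> D \<gamma> lam"
  then obtain g where \<mu>: "\<mu> = lam \<circ> Ad \<kappa> D \<gamma> (ginv \<kappa> D \<gamma> g)"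
    unfolding coadjoint_orbit_def by blast
  obtain z v t where g: "g = (z, v, t)" using prod_cases3 by blast
  have "Ad \<kappa> D \<gamma> (- z, u, s) = Ad \<kappa> D \<gamma> (0, u, s)" for u s
    by (simp add: fun_eq_iff Ad_eq)
  then have "\<mu> = lam \<circ> Ad \<kappa> D \<gamma> (0, - \<gamma> (- t) v, - t)"
    unfolding \<mu> g ginv_eq by simp
  then show "\<mu> \<in> {lam \<circ> Ad \<kappa> D \<gamma> (0, v, t) | v t. True}" by blast
next
  fix \<mu> assume "\<mu> \<in> {lam \<circ> Ad \<kappa> D \<gamma> (0, v, t) | v t. True}"
  then obtain v t where "\<mu> = lam \<circ> Ad \<kappa> D \<gamma> (0, v, t)" by blast
  also have "(0, v, t) = ginv \<kappa> D \<gamma> (0, - \<gamma> (- t) v, - t)"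
    by (simp add: ginv_eq linear_simps gamma_uminus_cancel)
  finally show "\<mu> \<in> coadjoint_orbit \<kappa> D \<gamma> lam"
    unfolding coadjoint_orbit_def by blast
qed

lemma gamma_invariant_if_annihilates_range_D:
  fixes \<alpha> :: "'v \<Rightarrow> real"
  assumes "linear \<alpha>" and "continuous_on UNIV \<alpha>" and "\<And>x. \<alpha> (D x) = 0"
  shows "\<alpha> (\<gamma> t w) = \<alpha> w"
proof -
  define f where "f s = \<alpha> (\<gamma> s w)" for s
  have "(f has_real_derivative 0) (at s)" for s
  proof -
    have "((\<lambda>h. \<alpha> ((1 / h) *\<^sub>R (\<gamma> h (\<gamma> s w) - \<gamma> s w))) \<longlongrightarrow> \<alpha> (D (\<gamma> s w))) (at 0)"
      using continuous_on_tendsto_compose[OF assms(2) gamma_generator] by simp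
    moreover have "\<alpha> ((1 / h) *\<^sub>R (\<gamma> h (\<gamma> s w) - \<gamma> s w)) = (f (s + h) - f s) / h" for h
      using assms(1) gamma_add[of h s w]
      by (simp add: f_def linear_cmul linear_diff add.commute divide_inverse mult.commute)
    ultimately show ?thesis using assms(3) by (simp add: DERIV_def)
  qed
  then have "f t = f 0"
    using DERIV_const_ratio_const[of 0 t f 0] by (cases "t = 0") auto
  then show ?thesis by (simp add: f_def gamma_zero)
qed

text \<open>A discrete form of \<open>\<gamma>\<^sub>t w - w = D (\<integral>\<^sub>0\<^sup>t \<gamma>\<^sub>s w ds)\<close>; \<open>q\<close> is the error of the difference
  quotient at step \<open>h\<close>.\<close>

lemma gamma_diff_Riemann_sum:
  assumes "\<gamma> h w - w = h *\<^sub>R (q + D w)"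
  shows "\<gamma> (real N * h) w - w = (\<Sum>i<N. h *\<^sub>R \<gamma> (real i * h) q) + D (\<Sum>i<N. h *\<^sub>R \<gamma> (real i * h) w)"
proof -
  have "\<gamma> (real (Suc i) * h) w - \<gamma> (real i * h) w = \<gamma> (real i * h) (\<gamma> h w - w)" for i
    using gamma_add[of "real i * h" h w] by (simp add: linear_simps algebra_simps)
  then have "\<gamma> (real N * h) w - w = (\<Sum>i<N. h *\<^sub>R \<gamma> (real i * h) q + h *\<^sub>R \<gamma> (real i * h) (D w))"
    using sum_lessThan_telescope[of "\<lambda>i. \<gamma> (real i * h) w" N]
    by (simp add: assms gamma_zero linear_simps scaleR_add_right)
  then show ?thesis
    by (simp add: sum.distrib linear_sum[OF linear_D] linear_simps D_gamma_commute)
qed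

lemma gamma_quotient_near_generator:
  assumes "open X" and "0 \<in> X" and "t \<noteq> 0"
  obtains N :: nat where "N > 0" and "(real N / t) *\<^sub>R (\<gamma> (t / real N) w - w) - D w \<in> X"
proof -
  have "((\<lambda>h. (1 / h) *\<^sub>R (\<gamma> h w - w) - D w) \<longlongrightarrow> D w - D w) (at 0)"
    by (intro tendsto_diff gamma_generator tendsto_const)
  then have "\<forall>\<^sub>F h in at 0. (1 / h) *\<^sub>R (\<gamma> h w - w) - D w \<in> X"
    using assms(1,2) by (simp add: tendsto_def)
  moreover have "filterlim (\<lambda>N. t / real N) (at 0) sequentially"
    using assms(3) by (intro filterlim_atI lim_const_over_n) (simp add: eventually_gt_at_top)
  ultimately have "\<forall>\<^sub>F N in sequentially. (1 / (t / real N)) *\<^sub>R (\<gamma> (t / real N) w - w) - D w \<in> X"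
    by (rule eventually_compose_filterlim)
  then have "\<forall>\<^sub>F N in sequentially. N > 0 \<and> (real N / t) *\<^sub>R (\<gamma> (t / real N) w - w) - D w \<in> X"
    by (intro eventually_conj eventually_gt_at_top) simp
  then show ?thesis using that by (metis (lifting) eventually_sequentially order.refl)
qed

lemma small_along_gamma_near_zero:
  fixes \<alpha> :: "'v \<Rightarrow> real"
  assumes "continuous_on UNIV \<alpha>" and "linear \<alpha>" and "\<epsilon> > 0"
  obtains X where "open X" and "0 \<in> X"
    and "\<And>q s. q \<in> X \<Longrightarrow> s \<in> {-T..T} \<Longrightarrow> \<bar>\<alpha> (\<gamma> s q)\<bar> < \<epsilon>"
    and "\<And>q. q \<in> X \<Longrightarrow> knorm q < \<epsilon>"
proof -
  define W where "W = {p::'v \<times> real. \<bar>\<alpha> (\<gamma> (snd p) (fst p))\<bar> < \<epsilon>}"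
  have "continuous_on UNIV (\<lambda>p::'v \<times> real. \<gamma> (snd p) (fst p))"
    using continuous_on_compose2[OF continuous_on_gamma_joint continuous_on_swap subset_UNIV]
    by (simp add: prod.swap_def)
  then have "continuous_on UNIV (\<lambda>p::'v \<times> real. \<bar>\<alpha> (\<gamma> (snd p) (fst p))\<bar>)"
    by (intro continuous_on_rabs continuous_on_compose2[OF assms(1) _ subset_UNIV])
  then have W: "open W" unfolding W_def
    by (intro open_Collect_less continuous_on_const)
  have "{0} \<times> {-T..T} \<subseteq> W"
    using assms(2,3) by (auto simp: W_def gamma_zero_right linear_0)
  from Elementary_Topology.tube_lemma[OF compact_Icc W this]
  obtain X0 where X0: "0 \<in> X0" "open X0" "X0 \<times> {-T..T} \<subseteq> W"
    by blast
  have "open {q. knorm q < \<epsilon>}"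
    by (rule open_Collect_less[OF continuous_on_knorm continuous_on_const])
  show ?thesis
  proof (rule that[of "X0 \<inter> {q. knorm q < \<epsilon>}"])
    show "open (X0 \<inter> {q. knorm q < \<epsilon>})"
      by (rule open_Int[OF X0(2) \<open>open {q. knorm q < \<epsilon>}\<close>])
    show "0 \<in> X0 \<inter> {q. knorm q < \<epsilon>}"
      using X0(1) assms(3) by (simp add: knorm_zero)
    show "\<bar>\<alpha> (\<gamma> s q)\<bar> < \<epsilon>" if "q \<in> X0 \<inter> {q. knorm q < \<epsilon>}" "s \<in> {-T..T}" for q s
    proof -
      have "(q, s) \<in> W" using X0(3) that by blast
      then show ?thesis by (simp add: W_def)
    qed
  qed simp
qed

lemma alpha_gamma_diff_bound:
  fixes \<alpha> :: "'v \<Rightarrow> real"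
  assumes lin: "linear \<alpha>" and cont: "continuous_on UNIV \<alpha>" and "C \<ge> 0"
    and bound: "\<And>x. \<bar>\<alpha> (D x)\<bar> \<le> C * knorm (D x)"
  shows "\<bar>\<alpha> (\<gamma> t w - w)\<bar> \<le> C * (2 * knorm w + 1) + 1"
proof (cases "t = 0")
  case True
  then show ?thesis using assms(3) knorm_nonneg[of w] lin by (simp add: gamma_zero linear_0)
next
  case False
  define \<epsilon> where "\<epsilon> = 1 / (1 + \<bar>t\<bar>)"
  have \<epsilon>: "\<epsilon> > 0" "\<bar>t\<bar> * \<epsilon> \<le> 1" by (auto simp: \<epsilon>_def field_simps)
  obtain X where X: "open X" "0 \<in> X"
    and X_\<alpha>: "\<And>q s. q \<in> X \<Longrightarrow> s \<in> {-\<bar>t\<bar>..\<bar>t\<bar>} \<Longrightarrow> \<bar>\<alpha> (\<gamma> s q)\<bar> < \<epsilon>"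
    and X_knorm: "\<And>q. q \<in> X \<Longrightarrow> knorm q < \<epsilon>"
    using small_along_gamma_near_zero[OF cont lin \<epsilon>(1)] by blast
  obtain N :: nat where N: "N > 0" and quotient: "(real N / t) *\<^sub>R (\<gamma> (t / real N) w - w) - D w \<in> X"
    using gamma_quotient_near_generator[OF X False] by blast
  define h where "h = t / real N"
  define q where "q = (real N / t) *\<^sub>R (\<gamma> h w - w) - D w"
  define R where "R = (\<Sum>i<N. h *\<^sub>R \<gamma> (real i * h) q)"
  define y where "y = (\<Sum>i<N. h *\<^sub>R \<gamma> (real i * h) w)"
  have q: "q \<in> X" using quotient by (simp add: q_def h_def)
  have "\<gamma> h w - w = h *\<^sub>R (q + D w)" using False N by (simp add: q_def h_def)
  from gamma_diff_Riemann_sum[OF this, of N]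
  have decomp: "\<gamma> t w - w = R + D y" using N by (simp add: R_def y_def h_def)
  have Nh: "real N * \<bar>h\<bar> = \<bar>t\<bar>" using N by (simp add: h_def abs_divide)
  have "real i * h \<in> {-\<bar>t\<bar>..\<bar>t\<bar>}" if "i < N" for i
  proof -
    have "\<bar>real i * h\<bar> \<le> real N * \<bar>h\<bar>" using that by (simp add: abs_mult mult_right_mono)
    then show ?thesis using Nh by (simp add: abs_le_iff)
  qed
  then have "\<bar>h * \<alpha> (\<gamma> (real i * h) q)\<bar> \<le> \<bar>h\<bar> * \<epsilon>" if "i < N" for i
    using X_\<alpha>[OF q] that by (simp add: abs_mult less_imp_le mult_left_mono)
  then have "\<bar>\<Sum>i<N. h * \<alpha> (\<gamma> (real i * h) q)\<bar> \<le> (\<Sum>i<N. \<bar>h\<bar> * \<epsilon>)"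
    by (intro order_trans[OF sum_abs] sum_mono) simp
  then have "\<bar>\<alpha> R\<bar> \<le> 1"
    using Nh \<epsilon>(2) lin by (simp add: R_def linear_sum linear_cmul mult.assoc[symmetric])
  have "knorm R \<le> (\<Sum>i<N. \<bar>h\<bar> * \<epsilon>)"
    unfolding R_def using X_knorm[OF q]
    by (intro order_trans[OF knorm_sum] sum_mono) (simp add: knorm_scaleR knorm_gamma mult_left_mono)
  then have "knorm R \<le> 1" using Nh \<epsilon>(2) by (simp add: mult.assoc[symmetric])
  moreover have "knorm (D y) \<le> knorm (\<gamma> t w - w) + knorm R"
    using decomp knorm_diff[of "\<gamma> t w - w" R] by simp
  moreover have "knorm (\<gamma> t w - w) \<le> 2 * knorm w"
    using knorm_diff[of "\<gamma> t w" w] by (simp add: knorm_gamma)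
  ultimately have "knorm (D y) \<le> 2 * knorm w + 1" by linarith
  then have "\<bar>\<alpha> (D y)\<bar> \<le> C * (2 * knorm w + 1)"
    using bound[of y] assms(3) by (meson mult_left_mono order_trans)
  then show ?thesis
    using decomp \<open>\<bar>\<alpha> R\<bar> \<le> 1\<close> lin by (simp add: linear_add)
qed

section \<open>Semi-equicontinuous coadjoint orbits\<close>

abbreviation orbit :: "real \<Rightarrow> ('v \<Rightarrow> real) \<Rightarrow> real \<Rightarrow> (real \<times> 'v \<times> real \<Rightarrow> real) set" where
  "orbit zs \<alpha> ts \<equiv> coadjoint_orbit \<kappa> D \<gamma> (dual_triple zs \<alpha> ts)"

lemma orbit_quadratic_bound:
  fixes \<alpha> :: "'v \<Rightarrow> real"
  assumes "linear \<alpha>" and "\<And>\<mu>. \<mu> \<in> orbit zs \<alpha> ts \<Longrightarrow> \<mu> (- (a, w, r)) \<le> C"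
  shows "(zs * r / 2 * \<kappa> (D v) (D v)) * L\<^sup>2 + (r * \<alpha> (D v) - zs * \<kappa> (D v) w) * L
    + (- zs * a - \<alpha> w - ts * r) \<le> C"
proof -
  have "dual_triple zs \<alpha> ts \<circ> Ad \<kappa> D \<gamma> (0, L *\<^sub>R v, 0) \<in> orbit zs \<alpha> ts"
    unfolding coadjoint_orbit_eq by blast
  from assms(2)[OF this] show ?thesis
    using assms(1) by (simp add: Ad_eq gamma_zero D_scaleR kappa_simps linear_diff linear_cmul
        power2_eq_square algebra_simps)
qed

lemma coadjoint_orbit_trivial:
  fixes \<alpha> :: "'v \<Rightarrow> real"
  assumes "linear \<alpha>" and "continuous_on UNIV \<alpha>" and "\<And>x. \<alpha> (D x) = 0"
  shows "orbit 0 \<alpha> ts = {dual_triple 0 \<alpha> ts}"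
proof -
  have "dual_triple 0 \<alpha> ts \<circ> Ad \<kappa> D \<gamma> (0, v, t) = dual_triple 0 \<alpha> ts" for v t
    using gamma_invariant_if_annihilates_range_D[OF assms] assms(1)
    by (auto simp: fun_eq_iff Ad_eq linear_diff linear_cmul assms(3))
  then show ?thesis unfolding coadjoint_orbit_eq by auto
qed

lemma coadjoint_orbit_nontrivial:
  fixes \<alpha> :: "'v \<Rightarrow> real"
  assumes "linear \<alpha>" and "zs \<noteq> 0" and "D \<noteq> (\<lambda>x. 0)"
  shows "nontrivial_set (orbit zs \<alpha> ts)"
proof -
  obtain v where v: "D v \<noteq> 0" using assms(3) by auto
  define \<mu>0 \<mu>1 where "\<mu>0 = dual_triple zs \<alpha> ts \<circ> Ad \<kappa> D \<gamma> (0, 0, 0)"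
    and "\<mu>1 = dual_triple zs \<alpha> ts \<circ> Ad \<kappa> D \<gamma> (0, v, 0)"
  have "\<mu>0 \<in> orbit zs \<alpha> ts" "\<mu>1 \<in> orbit zs \<alpha> ts"
    unfolding coadjoint_orbit_eq \<mu>0_def \<mu>1_def by blast+
  moreover have "\<mu>1 (0, D v, 0) - \<mu>0 (0, D v, 0) = zs * \<kappa> (D v) (D v)"
    using assms(1) by (simp add: \<mu>0_def \<mu>1_def Ad_eq gamma_zero D_zero kappa_simps linear_0)
  moreover have "zs * \<kappa> (D v) (D v) \<noteq> 0" using kappa_self_pos[OF v] assms(2) by simp
  ultimately show ?thesis unfolding nontrivial_set_def by force
qed

lemma kappa_bounded_range_D_if_quadratic_bound:
  fixes \<alpha> :: "'v \<Rightarrow> real"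
  assumes lin: "linear \<alpha>" and neg: "zs * r < 0"
    and bound: "\<And>v L. (zs * r / 2 * \<kappa> (D v) (D v)) * L\<^sup>2 + (r * \<alpha> (D v) - zs * \<kappa> (D v) w) * L + d \<le> C"
  shows "kappa_bounded \<kappa> (range D) \<alpha>"
proof -
  define K where "K = 2 * \<bar>zs * r\<bar> * (\<bar>C\<bar> + \<bar>d\<bar>)"
  have "\<bar>\<alpha> x\<bar> \<le> (sqrt K + \<bar>zs\<bar> * knorm w) / \<bar>r\<bar>" if "x \<in> range D" and x1: "\<kappa> x x \<le> 1" for x
  proof -
    obtain v where x: "x = D v" using \<open>x \<in> range D\<close> by blast
    define b where "b = r * \<alpha> x - zs * \<kappa> x w"
    have "b\<^sup>2 \<le> 4 * (- (zs * r / 2 * \<kappa> x x)) * (C - d)"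
      using quadratic_bounded_above(2)[OF bound[of v]] by (simp add: b_def x)
    also have "\<dots> = 2 * \<bar>zs * r\<bar> * (\<kappa> x x * (C - d))" using neg by simp
    also have "\<dots> \<le> K"
    proof -
      have "\<kappa> x x * (C - d) \<le> \<kappa> x x * (\<bar>C\<bar> + \<bar>d\<bar>)"
        by (intro mult_left_mono kappa_self_nonneg) auto
      also have "\<dots> \<le> \<bar>C\<bar> + \<bar>d\<bar>"
        using x1 kappa_self_nonneg[of x] by (intro mult_left_le_one_le) auto
      finally show ?thesis unfolding K_def by (simp add: mult_left_mono)
    qed
    finally have "\<bar>b\<bar> \<le> sqrt K" using real_sqrt_le_mono[of "b\<^sup>2" K] by simp
    moreover have "\<bar>\<kappa> x w\<bar> \<le> knorm w"
    proof -
      have "knorm x \<le> 1" using x1 by (simp add: knorm_def)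
      then have "knorm x * knorm w \<le> knorm w"
        by (intro mult_left_le_one_le knorm_nonneg)
      then show ?thesis using kappa_Cauchy_Schwarz[of x w] by linarith
    qed
    ultimately have "\<bar>b + zs * \<kappa> x w\<bar> \<le> sqrt K + \<bar>zs\<bar> * knorm w"
      by (intro order_trans[OF abs_triangle_ineq] add_mono) (auto simp: abs_mult mult_left_mono)
    then have "\<bar>r\<bar> * \<bar>\<alpha> x\<bar> \<le> sqrt K + \<bar>zs\<bar> * knorm w"
      by (simp add: b_def abs_mult)
    moreover have "\<bar>r\<bar> > 0" using neg by auto
    ultimately show ?thesis by (simp add: pos_le_divide_eq mult.commute)
  qed
  then show ?thesis unfolding kappa_bounded_def by blast
qed

lemma kappa_bounded_if_orbit_semi_equicontinuous:
  fixes \<alpha> :: "'v \<Rightarrow> real"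
  assumes lin: "linear \<alpha>" and cont: "continuous_on UNIV \<alpha>" and "D \<noteq> (\<lambda>x. 0)"
    and nontrivial: "nontrivial_set (orbit zs \<alpha> ts)"
    and "semi_equicontinuous (orbit zs \<alpha> ts)"
  shows "zs \<noteq> 0 \<and> kappa_bounded \<kappa> (range D) \<alpha>"
proof -
  obtain U y0 C where U: "open U" "y0 \<in> U"
    and C: "\<And>y \<mu>. y \<in> U \<Longrightarrow> \<mu> \<in> orbit zs \<alpha> ts \<Longrightarrow> \<mu> (- y) \<le> C"
    using semi_equicontinuousD[OF assms(5)] by metis
  obtain a0 w0 r0 where y0: "y0 = (a0, w0, r0)" using prod_cases3 by blast
  \<comment> \<open>the quadratic bound is only informative at a point with non-zero last coordinate\<close>
  obtain r where "r \<noteq> 0" and rU: "(a0, w0, r) \<in> U"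
  proof -
    have "open ((\<lambda>\<rho>::real. (a0, w0, \<rho>)) -` U)"
      by (rule continuous_imp_open_vimage[OF _ open_UNIV U(1) subset_UNIV]) (intro continuous_intros)
    moreover have "r0 \<in> (\<lambda>\<rho>::real. (a0, w0, \<rho>)) -` U" using U(2) y0 by simp
    ultimately obtain \<delta> where "\<delta> > 0" and \<delta>: "ball r0 \<delta> \<subseteq> (\<lambda>\<rho>::real. (a0, w0, \<rho>)) -` U"
      by (rule openE)
    define r where "r = (if r0 = 0 then \<delta> / 2 else r0)"
    have "r \<in> ball r0 \<delta>" using \<open>\<delta> > 0\<close> by (simp add: r_def dist_real_def)
    moreover have "r \<noteq> 0" using \<open>\<delta> > 0\<close> by (simp add: r_def)
    ultimately show ?thesis using that \<delta> by blast
  qed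
  have quad: "(zs * r / 2 * \<kappa> (D v) (D v)) * L\<^sup>2 + (r * \<alpha> (D v) - zs * \<kappa> (D v) w0) * L
      + (- zs * a0 - \<alpha> w0 - ts * r) \<le> C" for v L
    using lin C[OF rU] by (rule orbit_quadratic_bound)
  have "zs \<noteq> 0"
  proof
    assume "zs = 0"
    then have "\<alpha> (D v) = 0" for v
      using quadratic_bounded_above(2)[OF quad[of v]] \<open>r \<noteq> 0\<close> by simp
    then have "orbit zs \<alpha> ts = {dual_triple 0 \<alpha> ts}"
      using coadjoint_orbit_trivial[OF lin cont] \<open>zs = 0\<close> by simp
    with nontrivial show False unfolding nontrivial_set_def by blast
  qed
  moreover have "zs * r < 0"
  proof -
    obtain v where "D v \<noteq> 0" using assms(3) by auto
    have "zs * r / 2 * \<kappa> (D v) (D v) \<le> 0" using quadratic_bounded_above(1)[OF quad[of v]] .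
    then have "zs * r \<le> 0" using kappa_self_pos[OF \<open>D v \<noteq> 0\<close>] by (simp add: mult_le_0_iff)
    then show ?thesis using \<open>zs \<noteq> 0\<close> \<open>r \<noteq> 0\<close> by (simp add: order_le_less)
  qed
  ultimately show ?thesis
    using kappa_bounded_range_D_if_quadratic_bound[OF lin _ quad] by blast
qed

lemma coadjoint_orbit_value_uminus_le:
  fixes \<alpha> :: "'v \<Rightarrow> real"
  assumes lin: "linear \<alpha>" and cont: "continuous_on UNIV \<alpha>" and "C \<ge> 0"
    and bound: "\<And>x. \<bar>\<alpha> (D x)\<bar> \<le> C * knorm (D x)" and "zs \<noteq> 0"
    and a: "\<bar>a\<bar> \<le> 1" and w: "knorm w \<le> 1" "\<bar>\<alpha> w\<bar> \<le> 1"
    and r: "zs * r \<le> - \<bar>zs\<bar> / 2" "\<bar>r\<bar> \<le> 2"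
  shows "dual_triple zs \<alpha> ts (Ad \<kappa> D \<gamma> (0, v, t) (- (a, w, r)))
    \<le> \<bar>zs\<bar> + (\<bar>zs\<bar> + 2 * C)\<^sup>2 / \<bar>zs\<bar> + 3 * C + 2 + 2 * \<bar>ts\<bar>"
proof -
  define n where "n = knorm (D v)"
  have "n \<ge> 0" by (simp add: n_def knorm_nonneg)
  have "- zs * a \<le> \<bar>zs\<bar>" using mult_le_abs_mult_bound(2)[OF a, of zs] by simp
  moreover have "- zs * \<kappa> (D v) (\<gamma> t w) \<le> \<bar>zs\<bar> * n"
  proof -
    have "\<bar>\<kappa> (D v) (\<gamma> t w)\<bar> \<le> n"
      using kappa_Cauchy_Schwarz[of "D v" "\<gamma> t w"] mult_left_le[OF w(1) \<open>n \<ge> 0\<close>]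
      by (simp add: n_def knorm_gamma)
    from mult_le_abs_mult_bound(2)[OF this] show ?thesis by simp
  qed
  moreover have "zs * r / 2 * \<kappa> (D v) (D v) \<le> - (\<bar>zs\<bar> / 4) * n\<^sup>2"
    using mult_right_mono[OF r(1), of "n\<^sup>2 / 2"] by (simp add: n_def knorm_power2 kappa_self_nonneg)
  moreover have "- \<alpha> (\<gamma> t w) \<le> 3 * C + 2"
  proof -
    have "C * (2 * knorm w + 1) \<le> C * 3" using w(1) \<open>C \<ge> 0\<close> by (intro mult_left_mono) auto
    moreover have "\<alpha> (\<gamma> t w) = \<alpha> w + \<alpha> (\<gamma> t w - w)" using lin by (simp add: linear_diff)
    ultimately show ?thesis
      using alpha_gamma_diff_bound[OF lin cont \<open>C \<ge> 0\<close> bound, of t w] w(2) by linarith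
  qed
  moreover have "r * \<alpha> (D v) \<le> 2 * C * n"
    using mult_le_abs_mult_bound(1)[OF bound[of v], of r] mult_right_mono[OF r(2), of "C * n"]
      \<open>C \<ge> 0\<close> \<open>n \<ge> 0\<close> by (simp add: n_def)
  moreover have "- ts * r \<le> 2 * \<bar>ts\<bar>"
    using mult_le_abs_mult_bound(2)[OF r(2), of ts] by simp
  moreover have "(\<bar>zs\<bar> + 2 * C) * n - \<bar>zs\<bar> / 4 * n\<^sup>2 \<le> (\<bar>zs\<bar> + 2 * C)\<^sup>2 / \<bar>zs\<bar>"
    using concave_quadratic_le[of "\<bar>zs\<bar> / 4" "\<bar>zs\<bar> + 2 * C" n] \<open>zs \<noteq> 0\<close> by simp
  ultimately show ?thesis
    using lin by (simp add: Ad_eq gamma_zero kappa_simps linear_simps linear_diff linear_cmul linear_neg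
        algebra_simps)
qed

lemma orbit_semi_equicontinuous:
  fixes \<alpha> :: "'v \<Rightarrow> real"
  assumes lin: "linear \<alpha>" and cont: "continuous_on UNIV \<alpha>" and "zs \<noteq> 0"
    and "kappa_bounded \<kappa> (range D) \<alpha>"
  shows "semi_equicontinuous (orbit zs \<alpha> ts)"
proof -
  obtain C where "C \<ge> 0" and C: "\<And>x. \<bar>\<alpha> (D x)\<bar> \<le> C * knorm (D x)"
    using kappa_bounded_imp_le_knorm[OF lin assms(4) real_vector.linear_subspace_image[OF linear_D subspace_UNIV]]
    by (metis rangeI)
  \<comment> \<open>near r0 the quadratic term of every orbit element is negative definite in D v\<close>
  define r0 :: real where "r0 = - sgn zs"
  define U where "U = {y :: real \<times> 'v \<times> real. \<bar>fst y\<bar> < 1 \<and> knorm (fst (snd y)) < 1 \<and> \<bar>\<alpha> (fst (snd y))\<bar> < 1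
    \<and> \<bar>snd (snd y) - r0\<bar> < 1/2}"
  define M where "M = \<bar>zs\<bar> + (\<bar>zs\<bar> + 2 * C)\<^sup>2 / \<bar>zs\<bar> + 3 * C + 2 + 2 * \<bar>ts\<bar>"
  have "M \<ge> 0" using \<open>C \<ge> 0\<close> by (simp add: M_def)
  have U_bounds: "\<bar>a\<bar> \<le> 1" "knorm w \<le> 1" "\<bar>\<alpha> w\<bar> \<le> 1" "zs * r \<le> - \<bar>zs\<bar> / 2" "\<bar>r\<bar> \<le> 2"
    if "(a, w, r) \<in> U" for a w r
  proof -
    from that have r: "\<bar>r - r0\<bar> < 1/2" by (simp add: U_def)
    have "zs * r = - \<bar>zs\<bar> + zs * (r - r0)" by (simp add: r0_def algebra_simps abs_sgn)
    then show "zs * r \<le> - \<bar>zs\<bar> / 2" using mult_le_abs_mult_bound(1)[of "r - r0" "1/2" zs] r by simp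
    have "\<bar>r\<bar> \<le> \<bar>r - r0\<bar> + \<bar>r0\<bar>" by (metis abs_triangle_ineq diff_add_cancel)
    then show "\<bar>r\<bar> \<le> 2" using r \<open>zs \<noteq> 0\<close> by (simp add: r0_def)
  qed (use that in \<open>auto simp: U_def\<close>)
  show ?thesis
  proof (rule semi_equicontinuousI[where U = U and p = "(0, 0, r0)" and C = "M + \<bar>zs\<bar> + 1 + 2 * \<bar>ts\<bar>"])
    show "open U" unfolding U_def
      by (intro open_Collect_conj open_Collect_less continuous_intros
          continuous_on_compose2[OF continuous_on_knorm _ subset_UNIV]
          continuous_on_compose2[OF cont _ subset_UNIV])
    show "(0, 0, r0) \<in> U" using lin by (simp add: U_def knorm_zero linear_0)
  next
    fix y assume "y \<in> U"
    moreover obtain a w r where y: "y = (a, w, r)" using prod_cases3 by blast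
    ultimately have "(a, w, r) \<in> U" by simp
    note bounds = U_bounds[OF this]
    have "dual_triple zs \<alpha> ts \<circ> Ad \<kappa> D \<gamma> (0, 0, 0) \<in> orbit zs \<alpha> ts"
      unfolding coadjoint_orbit_eq by blast
    moreover have "- (M + \<bar>zs\<bar> + 1 + 2 * \<bar>ts\<bar>) \<le> - zs * a - \<alpha> w - ts * r"
      using mult_le_abs_mult_bound(1)[OF bounds(1), of zs] mult_le_abs_mult_bound(1)[OF bounds(5), of ts]
        bounds(3) \<open>M \<ge> 0\<close> by (simp only: mult_minus_left)
    moreover have "(dual_triple zs \<alpha> ts \<circ> Ad \<kappa> D \<gamma> (0, 0, 0)) (- y) = - zs * a - \<alpha> w - ts * r"
      using lin by (simp add: y Ad_eq gamma_zero kappa_simps linear_simps linear_neg)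
    ultimately show "\<exists>\<mu>\<in>orbit zs \<alpha> ts. - (M + \<bar>zs\<bar> + 1 + 2 * \<bar>ts\<bar>) \<le> \<mu> (- y)"
      by metis
    fix \<mu> assume "\<mu> \<in> orbit zs \<alpha> ts"
    then obtain v t where "\<mu> = dual_triple zs \<alpha> ts \<circ> Ad \<kappa> D \<gamma> (0, v, t)"
      unfolding coadjoint_orbit_eq by blast
    then have "\<mu> (- y) \<le> M"
      using coadjoint_orbit_value_uminus_le[OF lin cont \<open>C \<ge> 0\<close> C \<open>zs \<noteq> 0\<close> bounds]
      by (simp add: y M_def)
    then show "\<mu> (- y) \<le> M + \<bar>zs\<bar> + 1 + 2 * \<bar>ts\<bar>" by simp
  qed
qed

end

theorem proposition3p4:
  fixes \<kappa> :: "'v::locally_convex \<Rightarrow> 'v \<Rightarrow> real"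
    and D :: "'v \<Rightarrow> 'v" and \<gamma> :: "real \<Rightarrow> 'v \<Rightarrow> 'v"
    and zs ts :: real and \<alpha> :: "'v \<Rightarrow> real"
  assumes "lc_euclidean_form \<kappa>"
    and "skew_generator \<kappa> D \<gamma>"
    and "D \<noteq> (\<lambda>x. 0)"
    and "\<forall>x. (\<forall>y. omegaD \<kappa> D x y = 0) \<longrightarrow> x = 0"
    and "linear \<alpha>" and "continuous_on UNIV \<alpha>"
  shows "((nontrivial_set (coadjoint_orbit \<kappa> D \<gamma> (\<lambda>(z, x, t). zs * z + \<alpha> x + ts * t)) \<and>
          semi_equicontinuous (coadjoint_orbit \<kappa> D \<gamma> (\<lambda>(z, x, t). zs * z + \<alpha> x + ts * t)))
         \<longleftrightarrow> (zs \<noteq> 0 \<and> kappa_bounded \<kappa> (range D) \<alpha>)) \<and>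
         (closure (range D) = UNIV \<longrightarrow>
           (kappa_bounded \<kappa> (range D) \<alpha> \<longleftrightarrow> kappa_bounded \<kappa> UNIV \<alpha>))"
proof -
  interpret double_extension \<kappa> D \<gamma>
    using assms(1,2) by unfold_locales
  have "nontrivial_set (orbit zs \<alpha> ts) \<and> semi_equicontinuous (orbit zs \<alpha> ts)
      \<longleftrightarrow> zs \<noteq> 0 \<and> kappa_bounded \<kappa> (range D) \<alpha>"
    using kappa_bounded_if_orbit_semi_equicontinuous[OF assms(5,6,3)]
      coadjoint_orbit_nontrivial[OF assms(5) _ assms(3)] orbit_semi_equicontinuous[OF assms(5,6)]
    by blast
  moreover have "kappa_bounded \<kappa> (range D) \<alpha> \<longleftrightarrow> kappa_bounded \<kappa> UNIV \<alpha>"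
    if "closure (range D) = UNIV"
    using kappa_bounded_dense[OF assms(5,6) that] unfolding kappa_bounded_def by blast
  ultimately show ?thesis by blast
qed

end
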